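(* Let $\phi_1,\dots,\phi_n,\delta$ ($n\ge1$) be distinct variables, let $c_1,\dots,c_n\in[0,1]$ and $d=\mathrm{avg}(c_1,\dots,c_n)$. Let $\mathcal T$ be the theory consisting of $\phi_1,\dots,\phi_n\Rightarrow_1\delta$, $\ \sim\phi_1,\dots,\sim\phi_n\Rightarrow_1\sim\delta$, and, for $i=1,\dots,n$, $\phi_i\Rightarrow_{1-c_i}\bot$ and $\top\Rightarrow_{c_i}\phi_i$. Then $\mathcal T\vdash_{\mathsf{LGIM}}\top\Rightarrow_d\delta$ and $\mathcal T\vdash_{\mathsf{LGIM}}\delta\Rightarrow_{1-d}\bot$.
   Context: Fix a continuous t-norm $\odot$ on $[0,1]$ and let $c\oplus d = 1-((1-c)\odot(1-d))$. Write $c\odot_{\L} d=\max(c+d-1,0)$, $c\oplus_{\L} d=\min(c+d,1)$, and $\mathrm{avg}(r_1,\dots,r_n)=(r_1+\dots+r_n)/n$. Basic expressions: built from countably many variables $\phi_0,\phi_1,\dots$ and constants $\bot,\top$ by binary $\land,\lor,\odot$ and unary $\sim$. A generalised graded implication is written $\alpha_1,\dots,\alpha_n\Rightarrow_c\beta$ where $n\ge1$, $\alpha_1,\dots,\alpha_n$ is a multiset of basic expressions, $\beta$ a basic expression, $c\in[0,1]$; for $n=1$ it is a graded implication $\alpha\Rightarrow_c\beta$. Formulas of $\mathsf{LGIM}$ are built from generalised graded implications by classical $\land,\lor,\lnot$; $\Phi\to\Psi$ abbreviates $\lnot\Phi\lor\Psi$. A theory is a set of formulas. Calculus $\mathsf{LGIM}$: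 axioms are (i) all substitution instances (by generalised graded implications) of classical propositional tautologies; (ii) for all basic expressions $\alpha,\beta,\gamma$ and $c,d\in[0,1]$: ($\land_1$) $(\alpha\Rightarrow_d\beta)\land(\alpha\Rightarrow_d\gamma)\to(\alpha\Rightarrow_d\beta\land\gamma)$; ($\land_2$) $\alpha\land\beta\Rightarrow_1\alpha$; ($\land_3$) $\alpha\land\beta\Rightarrow_1\beta$; ($\lor_1$) $(\alpha\Rightarrow_d\gamma)\land(\beta\Rightarrow_d\gamma)\to(\alpha\lor\beta\Rightarrow_d\gamma)$; ($\lor_2$) $\alpha\Rightarrow_1\alpha\lor\beta$; ($\lor_3$) $\beta\Rightarrow_1\alpha\lor\beta$; ($\odot_1$) $(\top\Rightarrow_c\alpha)\land(\top\Rightarrow_d\beta)\to(\top\Rightarrow_{c\odot d}\alpha\odot\beta)$; ($\odot_2$) $(\alpha\Rightarrow_c\bot)\land(\beta\Rightarrow_d\bot)\to(\alpha\odot\beta\Rightarrow_{c\oplus d}\bot)$; ($\odot_3$) $\top\Rightarrow_1\top\odot\top$; ($\sim_1$) $(\alpha\Rightarrow_d\beta)\to(\sim\beta\Rightarrow_d\sim\alpha)$; ($\sim_2$) $\sim\sim\alpha\Rightarrow_1\alpha$; ($\sim_3$) $\alpha\Rightarrow_1\sim\sim\alpha$; ($\top$) $\alpha\Rightarrow_1\top$; ($\bot$) $\bot\Rightarrow_1\alpha$; (0) $\alpha\Rightarrow_0\beta$; ($c$) $\alpha\Rightarrow_c\alpha$; (inkons) $\lnot(\top\Rightarrow_c\bot)$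 for $c>0$; (trans$_1$) $(\alpha\Rightarrow_c\beta)\land(\beta\Rightarrow_d\gamma)\to(\alpha\Rightarrow_{c\odot_{\L}d}\gamma)$; (trans$_2$) $(\alpha\Rightarrow_c\bot)\land(\top\Rightarrow_d\beta)\to(\alpha\Rightarrow_{c\oplus_{\L}d}\beta)$; (lin$_1$) $(\alpha\Rightarrow_1\beta)\lor(\beta\Rightarrow_1\alpha)$; (lin$_2$) $(\top\Rightarrow_d\alpha)\lor(\alpha\Rightarrow_{1-d}\bot)$; (iii) for all basic expressions $\alpha,\alpha_i,\beta_i,\beta,\gamma$ and $c,c_i,d\in[0,1]$: (trans$\varnothing_1$) $(\alpha_1\Rightarrow_{c_1}\beta_1)\land\dots\land(\alpha_n\Rightarrow_{c_n}\beta_n)\land(\beta_1,\dots,\beta_n\Rightarrow_d\gamma)\to(\alpha_1,\dots,\alpha_n\Rightarrow_{\mathrm{avg}(c_1,\dots,c_n)\odot_{\L}d}\gamma)$; (trans$\varnothing_2$) $(\alpha_1,\dots,\alpha_n\Rightarrow_c\beta)\land(\beta\Rightarrow_d\gamma)\to(\alpha_1,\dots,\alpha_n\Rightarrow_{c\odot_{\L}d}\gamma)$; (trans$\varnothing_3$) $(\alpha_1\Rightarrow_{c_1}\bot)\land\dots\land(\alpha_n\Rightarrow_{c_n}\bot)\land(\top\Rightarrow_d\beta)\to(\alpha_1,\dots,\alpha_n\Rightarrow_{\mathrm{avg}(c_1,\dots,c_n)\oplus_{\L}d}\beta)$; ($\top\varnothing$) $(\top,\dots,\top\Rightarrow_c\alpha)\to(\top\Rightarrow_c\alpha)$.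 The only rule is modus ponens. $\mathcal T\vdash_{\mathsf{LGIM}}\Phi$ means $\Phi$ has a finite derivation from axioms and elements of $\mathcal T$ by modus ponens. *)

theory Defs
  imports "HOL-Analysis.Analysis" "HOL-Library.Multiset"
begin

definition is_cont_tnorm :: "(real \<Rightarrow> real \<Rightarrow> real) \<Rightarrow> bool" where
  "is_cont_tnorm T \<longleftrightarrow>
     (\<forall>x\<in>{0..1}. \<forall>y\<in>{0..1}. T x y \<in> {0..1}) \<and>
     (\<forall>x\<in>{0..1}. \<forall>y\<in>{0..1}. T x y = T y x) \<and>
     (\<forall>x\<in>{0..1}. \<forall>y\<in>{0..1}. \<forall>z\<in>{0..1}. T (T x y) z = T x (T y z)) \<and>
     (\<forall>x\<in>{0..1}. \<forall>y\<in>{0..1}. \<forall>z\<in>{0..1}. x \<le> y \<longrightarrow> T x z \<le> T y z) \<and>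
     (\<forall>x\<in>{0..1}. T x 1 = x) \<and>
     continuous_on ({0..1} \<times> {0..1}) (\<lambda>(x, y). T x y)"

definition tconorm :: "(real \<Rightarrow> real \<Rightarrow> real) \<Rightarrow> real \<Rightarrow> real \<Rightarrow> real" where
  "tconorm T c d = 1 - T (1 - c) (1 - d)"

definition luk_and :: "real \<Rightarrow> real \<Rightarrow> real" where
  "luk_and c d = max (c + d - 1) 0"

definition luk_or :: "real \<Rightarrow> real \<Rightarrow> real" where
  "luk_or c d = min (c + d) 1"

definition avg :: "real list \<Rightarrow> real" where
  "avg cs = sum_list cs / real (length cs)"

datatype bexp = BVar nat | BBot | BTop | BAnd bexp bexp | BOr bexp bexp
  | BOdot bexp bexp | BNeg bexp

text \<open>Formulas of LGIM: classical combinations of generalised graded implications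
  GImp M b c, standing for  alpha_1,...,alpha_n =>_c b  where M is the multiset
  of the alpha_i.\<close>
datatype fml = GImp "bexp multiset" bexp real | FAnd fml fml | FOr fml fml | FNot fml

definition gimp :: "bexp \<Rightarrow> bexp \<Rightarrow> real \<Rightarrow> fml" where
  "gimp a b c = GImp {#a#} b c"

definition FImp :: "fml \<Rightarrow> fml \<Rightarrow> fml" where
  "FImp P Q = FOr (FNot P) Q"

fun FConj :: "fml list \<Rightarrow> fml" where
  "FConj [] = FNot (FAnd (GImp {#BTop#} BTop 0) (FNot (GImp {#BTop#} BTop 0)))"
| "FConj [P] = P"
| "FConj (P # Ps) = FAnd P (FConj Ps)"

fun wf :: "fml \<Rightarrow> bool" where
  "wf (GImp M b c) \<longleftrightarrow> M \<noteq> {#} \<and> 0 \<le> c \<and> c \<le> 1"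
| "wf (FAnd P Q) \<longleftrightarrow> wf P \<and> wf Q"
| "wf (FOr P Q) \<longleftrightarrow> wf P \<and> wf Q"
| "wf (FNot P) \<longleftrightarrow> wf P"

fun ceval :: "(bexp multiset \<Rightarrow> bexp \<Rightarrow> real \<Rightarrow> bool) \<Rightarrow> fml \<Rightarrow> bool" where
  "ceval v (GImp M b c) = v M b c"
| "ceval v (FAnd P Q) = (ceval v P \<and> ceval v Q)"
| "ceval v (FOr P Q) = (ceval v P \<or> ceval v Q)"
| "ceval v (FNot P) = (\<not> ceval v P)"

text \<open>A formula is a substitution instance of a classical tautology iff it is
  true under every assignment of truth values to its atoms.\<close>
definition ctaut :: "fml \<Rightarrow> bool" where
  "ctaut P \<longleftrightarrow> wf P \<and> (\<forall>v. ceval v P)"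

abbreviation unit01 :: "real \<Rightarrow> bool" where
  "unit01 x \<equiv> 0 \<le> x \<and> x \<le> 1"

inductive lgim_axiom :: "(real \<Rightarrow> real \<Rightarrow> real) \<Rightarrow> fml \<Rightarrow> bool" for T where
  taut: "ctaut P \<Longrightarrow> lgim_axiom T P"
| and1: "unit01 d \<Longrightarrow> lgim_axiom T (FImp (FAnd (gimp a b d) (gimp a g d)) (gimp a (BAnd b g) d))"
| and2: "lgim_axiom T (gimp (BAnd a b) a 1)"
| and3: "lgim_axiom T (gimp (BAnd a b) b 1)"
| or1: "unit01 d \<Longrightarrow> lgim_axiom T (FImp (FAnd (gimp a g d) (gimp b g d)) (gimp (BOr a b) g d))"
| or2: "lgim_axiom T (gimp a (BOr a b) 1)"
| or3: "lgim_axiom T (gimp b (BOr a b) 1)"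
| odot1: "unit01 c \<Longrightarrow> unit01 d \<Longrightarrow>
    lgim_axiom T (FImp (FAnd (gimp BTop a c) (gimp BTop b d)) (gimp BTop (BOdot a b) (T c d)))"
| odot2: "unit01 c \<Longrightarrow> unit01 d \<Longrightarrow>
    lgim_axiom T (FImp (FAnd (gimp a BBot c) (gimp b BBot d)) (gimp (BOdot a b) BBot (tconorm T c d)))"
| odot3: "lgim_axiom T (gimp BTop (BOdot BTop BTop) 1)"
| neg1: "unit01 d \<Longrightarrow> lgim_axiom T (FImp (gimp a b d) (gimp (BNeg b) (BNeg a) d))"
| neg2: "lgim_axiom T (gimp (BNeg (BNeg a)) a 1)"
| neg3: "lgim_axiom T (gimp a (BNeg (BNeg a)) 1)"
| top: "lgim_axiom T (gimp a BTop 1)"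
| bot: "lgim_axiom T (gimp BBot a 1)"
| zero: "lgim_axiom T (gimp a b 0)"
| refl: "unit01 c \<Longrightarrow> lgim_axiom T (gimp a a c)"
| inkons: "0 < c \<Longrightarrow> c \<le> 1 \<Longrightarrow> lgim_axiom T (FNot (gimp BTop BBot c))"
| trans1: "unit01 c \<Longrightarrow> unit01 d \<Longrightarrow>
    lgim_axiom T (FImp (FAnd (gimp a b c) (gimp b g d)) (gimp a g (luk_and c d)))"
| trans2: "unit01 c \<Longrightarrow> unit01 d \<Longrightarrow>
    lgim_axiom T (FImp (FAnd (gimp a BBot c) (gimp BTop b d)) (gimp a b (luk_or c d)))"
| lin1: "lgim_axiom T (FOr (gimp a b 1) (gimp b a 1))"
| lin2: "unit01 d \<Longrightarrow> lgim_axiom T (FOr (gimp BTop a d) (gimp a BBot (1 - d)))"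
| transM1: "length as = n \<Longrightarrow> length bs = n \<Longrightarrow> length cs = n \<Longrightarrow> n \<ge> 1 \<Longrightarrow>
    (\<forall>c\<in>set cs. unit01 c) \<Longrightarrow> unit01 d \<Longrightarrow>
    lgim_axiom T (FImp
      (FAnd (FConj (map (\<lambda>i. gimp (as ! i) (bs ! i) (cs ! i)) [0..<n])) (GImp (mset bs) g d))
      (GImp (mset as) g (luk_and (avg cs) d)))"
| transM2: "M \<noteq> {#} \<Longrightarrow> unit01 c \<Longrightarrow> unit01 d \<Longrightarrow>
    lgim_axiom T (FImp (FAnd (GImp M b c) (gimp b g d)) (GImp M g (luk_and c d)))"
| transM3: "length as = n \<Longrightarrow> length cs = n \<Longrightarrow> n \<ge> 1 \<Longrightarrow>
    (\<forall>c\<in>set cs. unit01 c) \<Longrightarrow> unit01 d \<Longrightarrow>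
    lgim_axiom T (FImp
      (FAnd (FConj (map (\<lambda>i. gimp (as ! i) BBot (cs ! i)) [0..<n])) (gimp BTop b d))
      (GImp (mset as) b (luk_or (avg cs) d)))"
| topM: "n \<ge> 1 \<Longrightarrow> unit01 c \<Longrightarrow>
    lgim_axiom T (FImp (GImp (replicate_mset n BTop) a c) (gimp BTop a c))"

inductive derivable :: "(real \<Rightarrow> real \<Rightarrow> real) \<Rightarrow> fml set \<Rightarrow> fml \<Rightarrow> bool" for T Th where
  ax: "lgim_axiom T P \<Longrightarrow> derivable T Th P"
| hyp: "P \<in> Th \<Longrightarrow> derivable T Th P"
| mp: "derivable T Th (FImp P Q) \<Longrightarrow> derivable T Th P \<Longrightarrow> derivable T Th Q"

end

theory Submission
  imports Defs
begin

text \<open>Both claims come from one derived rule: from \<open>\<top> \<Rightarrow>_(c_i) \<beta>_i\<close> for all i and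
  \<open>\<beta>_1,\<dots>,\<beta>_n \<Rightarrow>_1 \<gamma>\<close>, axiom (trans\<emptyset>_1) with antecedents \<open>\<top>,\<dots>,\<top>\<close> followed
  by (\<top>\<emptyset>) yields \<open>\<top> \<Rightarrow>_avg(c) \<gamma>\<close>.  Applied to the variables this gives \<open>\<top> \<Rightarrow>_d \<delta>\<close>.
  Contraposition together with \<open>\<top> \<Rightarrow>_1 \<sim>\<bottom>\<close> and \<open>\<sim>\<top> \<Rightarrow>_1 \<bottom>\<close> turns \<open>\<alpha> \<Rightarrow>_c \<bottom>\<close> into
  \<open>\<top> \<Rightarrow>_c \<sim>\<alpha>\<close> and back, so the same rule applied to the negated variables gives
  \<open>\<top> \<Rightarrow>_(1-d) \<sim>\<delta>\<close>, i.e. \<open>\<delta> \<Rightarrow>_(1-d) \<bottom>\<close>.\<close>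

lemma wf_gimp [simp]: "wf (gimp a b c) \<longleftrightarrow> unit01 c"
  by (simp add: gimp_def)

lemma luk_and_one [simp]: "unit01 x \<Longrightarrow> luk_and x 1 = x" "unit01 x \<Longrightarrow> luk_and 1 x = x"
  by (auto simp: luk_and_def)

lemma luk_and_unit01: "unit01 (luk_and x y)" if "x \<le> 1" "y \<le> 1"
  using that by (simp add: luk_and_def)

lemma avg_unit01:
  assumes "cs \<noteq> []" "\<forall>c\<in>set cs. unit01 c"
  shows "unit01 (avg cs)"
proof -
  have "0 \<le> sum_list cs" using assms(2) by (intro sum_list_nonneg) auto
  moreover have "sum_list cs \<le> sum_list (map (\<lambda>_. 1::real) cs)"
    using assms(2) sum_list_mono[of cs id "\<lambda>_. 1"] by auto
  ultimately show ?thesis using assms(1) by (simp add: avg_def sum_list_triv)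
qed

lemma avg_map_upt: "avg (map f [0..<n]) = (\<Sum>i<n. f i) / real n"
  by (simp add: avg_def sum_set_upt_conv_sum_list_nat[symmetric] lessThan_atLeast0)

lemma avg_map_upt_complement:
  assumes "n \<ge> 1"
  shows "avg (map (\<lambda>i. 1 - f i) [0..<n]) = 1 - avg (map f [0..<n])"
  using assms by (simp add: avg_map_upt sum_subtractf diff_divide_distrib)

lemma derivable_FAnd:
  assumes "derivable T Th P" "derivable T Th Q" "wf P" "wf Q"
  shows "derivable T Th (FAnd P Q)"
proof -
  have "lgim_axiom T (FImp P (FImp Q (FAnd P Q)))"
    by (rule lgim_axiom.taut) (auto simp: ctaut_def FImp_def assms)
  then show ?thesis using assms by (meson derivable.intros)
qed

lemma wf_FConj: "Ps \<noteq> [] \<Longrightarrow> \<forall>P\<in>set Ps. wf P \<Longrightarrow> wf (FConj Ps)"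
  by (induction Ps rule: FConj.induct) auto

lemma derivable_FConj:
  "Ps \<noteq> [] \<Longrightarrow> \<forall>P\<in>set Ps. derivable T Th P \<and> wf P \<Longrightarrow> derivable T Th (FConj Ps)"
proof (induction Ps rule: FConj.induct)
  case (3 P Q Qs)
  then show ?case using derivable_FAnd wf_FConj[of "Q # Qs"] by auto
qed auto

lemma derivable_mp_conj:
  assumes "derivable T Th (FImp (FAnd P Q) R)" "derivable T Th P" "derivable T Th Q" "wf P" "wf Q"
  shows "derivable T Th R"
  using assms derivable_FAnd derivable.mp by blast

lemma derivable_trans:
  assumes "derivable T Th (gimp a b c)" "derivable T Th (gimp b g e)" "unit01 c" "unit01 e"
  shows "derivable T Th (gimp a g (luk_and c e))"
  using derivable_mp_conj[OF derivable.ax[OF lgim_axiom.trans1[of c e T a b g]] assms(1,2)] assms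
  by simp

lemma derivable_contrapos:
  assumes "derivable T Th (gimp a b c)" "unit01 c"
  shows "derivable T Th (gimp (BNeg b) (BNeg a) c)"
  using derivable.mp[OF derivable.ax[OF lgim_axiom.neg1[of c T a b]] assms(1)] assms(2) by simp

lemma derivable_top_imp_neg_bot: "derivable T Th (gimp BTop (BNeg BBot) 1)"
proof -
  have "derivable T Th (gimp (BNeg (BNeg BTop)) (BNeg BBot) 1)"
    using derivable_contrapos[OF derivable.ax[OF lgim_axiom.bot[of T "BNeg BTop"]]] by simp
  from derivable_trans[OF derivable.ax[OF lgim_axiom.neg3[of T BTop]] this] show ?thesis by simp
qed

lemma derivable_neg_top_imp_bot: "derivable T Th (gimp (BNeg BTop) BBot 1)"
proof -
  have "derivable T Th (gimp (BNeg BTop) (BNeg (BNeg BBot)) 1)"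
    using derivable_contrapos[OF derivable.ax[OF lgim_axiom.top[of T "BNeg BBot"]]] by simp
  from derivable_trans[OF this derivable.ax[OF lgim_axiom.neg2[of T BBot]]] show ?thesis by simp
qed

lemma derivable_top_imp_neg_if_imp_bot:
  assumes "derivable T Th (gimp a BBot c)" "unit01 c"
  shows "derivable T Th (gimp BTop (BNeg a) c)"
  using derivable_trans[OF derivable_top_imp_neg_bot derivable_contrapos[OF assms]] assms(2)
  by simp

lemma derivable_imp_bot_if_top_imp_neg:
  assumes "derivable T Th (gimp BTop (BNeg a) c)" "unit01 c"
  shows "derivable T Th (gimp a BBot c)"
proof -
  have "derivable T Th (gimp a (BNeg BTop) c)"
    using derivable_trans[OF derivable.ax[OF lgim_axiom.neg3[of T a]]
        derivable_contrapos[OF assms]] assms(2)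
    by simp
  from derivable_trans[OF this derivable_neg_top_imp_bot] show ?thesis using assms(2) by simp
qed

lemma derivable_top_imp_avg:
  assumes "bs \<noteq> []" "length cs = length bs" "\<forall>c\<in>set cs. unit01 c" "unit01 e"
    and tops: "\<forall>i<length bs. derivable T Th (gimp BTop (bs ! i) (cs ! i))"
    and multi: "derivable T Th (GImp (mset bs) g e)"
  shows "derivable T Th (gimp BTop g (luk_and (avg cs) e))"
proof -
  let ?n = "length bs"
  let ?premises = "map (\<lambda>i. gimp (replicate ?n BTop ! i) (bs ! i) (cs ! i)) [0..<?n]"
  have "derivable T Th (FConj ?premises)" "wf (FConj ?premises)"
    using assms(1-3) tops by (auto intro!: derivable_FConj wf_FConj)
  moreover have "wf (GImp (mset bs) g e)" using assms(1,4) by simp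
  moreover have n_pos: "?n \<ge> 1" using assms(1) by (simp add: Suc_leI)
  ultimately have tops_multi: "derivable T Th (GImp (replicate_mset ?n BTop) g (luk_and (avg cs) e))"
    using derivable_mp_conj[OF derivable.ax[OF lgim_axiom.transM1[of "replicate ?n BTop" ?n bs cs e T g]]
        _ multi] assms(2-4)
    by simp
  have "cs \<noteq> []" using assms(1,2) by auto
  then have "unit01 (luk_and (avg cs) e)"
    using avg_unit01[of cs] assms(3,4) by (intro luk_and_unit01) auto
  from derivable.mp[OF derivable.ax[OF lgim_axiom.topM[OF n_pos this]] tops_multi]
  show ?thesis .
qed

theorem mainTheorem10:
  fixes T :: "real \<Rightarrow> real \<Rightarrow> real"
    and n :: nat and p :: "nat \<Rightarrow> nat" and k :: nat and c :: "nat \<Rightarrow> real"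
  assumes "is_cont_tnorm T"
    and "n \<ge> 1"
    and "inj_on p {..<n}"
    and "k \<notin> p ` {..<n}"
    and "\<forall>i<n. 0 \<le> c i \<and> c i \<le> 1"
    and "d = (\<Sum>i<n. c i) / real n"
    and "Th = {GImp (mset (map (\<lambda>i. BVar (p i)) [0..<n])) (BVar k) 1,
               GImp (mset (map (\<lambda>i. BNeg (BVar (p i))) [0..<n])) (BNeg (BVar k)) 1}
             \<union> (\<Union>i\<in>{..<n}. {gimp (BVar (p i)) BBot (1 - c i), gimp BTop (BVar (p i)) (c i)})"
  shows "derivable T Th (gimp BTop (BVar k) d) \<and> derivable T Th (gimp (BVar k) BBot (1 - d))"
proof
  let ?vars = "map (\<lambda>i. BVar (p i)) [0..<n]"
  let ?neg_vars = "map (\<lambda>i. BNeg (BVar (p i))) [0..<n]"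
  have d_avg: "d = avg (map c [0..<n])" using assms(6) by (simp add: avg_map_upt)
  have d_unit: "unit01 d" using avg_unit01[of "map c [0..<n]"] assms(2,5) d_avg by auto
  have vars_multi: "derivable T Th (GImp (mset ?vars) (BVar k) 1)"
    and neg_vars_multi: "derivable T Th (GImp (mset ?neg_vars) (BNeg (BVar k)) 1)"
    by (rule derivable.hyp, simp add: assms(7))+
  have vars_top: "derivable T Th (gimp BTop (BVar (p i)) (c i))"
    and vars_bot: "derivable T Th (gimp (BVar (p i)) BBot (1 - c i))" if "i < n" for i
    using that by (auto intro: derivable.hyp simp: assms(7))
  have neg_vars_top: "derivable T Th (gimp BTop (BNeg (BVar (p i))) (1 - c i))" if "i < n" for i
    using derivable_top_imp_neg_if_imp_bot[OF vars_bot] that assms(5) by simp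
  show "derivable T Th (gimp BTop (BVar k) d)"
    using derivable_top_imp_avg[OF _ _ _ _ _ vars_multi, of "map c [0..<n]"]
      assms(2,5) vars_top d_avg d_unit
    by auto
  have "derivable T Th (gimp BTop (BNeg (BVar k)) (1 - d))"
    using derivable_top_imp_avg[OF _ _ _ _ _ neg_vars_multi, of "map (\<lambda>i. 1 - c i) [0..<n]"]
      assms(2,5) neg_vars_top avg_map_upt_complement[OF assms(2)] d_avg d_unit
    by auto
  then show "derivable T Th (gimp (BVar k) BBot (1 - d))"
    using derivable_imp_bot_if_top_imp_neg d_unit by simp
qed

end
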